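(* Let $(G,\sigma)$ be a connection graph and $i\neq j\in V$, and write $\mathcal{C}^\sigma(i,j)=\begin{bmatrix}\mathcal{C}^\sigma_{ii}&\mathcal{C}^\sigma_{ij}\\ \mathcal{C}^\sigma_{ji}&\mathcal{C}^\sigma_{jj}\end{bmatrix}$. Then $$\mathcal{C}^\sigma(i,j)/\mathcal{C}^\sigma_{jj}=\deg(i)(I_{d\times d}-\Omega^1_i)\quad\text{and}\quad \mathcal{C}^\sigma(i,j)/\mathcal{C}^\sigma_{ii}=\deg(j)(I_{d\times d}-\Omega^1_j).$$
   Context: A connection graph $(G,\sigma)$: finite connected weighted graph $G=(V,E,W)$, $V=\{1,\dots,n\}$, $w_{xy}>0$ iff $\{x,y\}\in E$, $\deg(x)=\sum_y w_{xy}$, and $\sigma$ mapping oriented edges to $\mathsf{O}(d)$ with $\sigma_{yx}=\sigma_{xy}^{\mathrm T}$. Connection Laplacian $\mathcal{L}$: $nd\times nd$ block matrix with blocks $\deg(x)I_d$ on the diagonal, $-w_{xy}\sigma_{xy}$ for $x\sim y$, $0$ otherwise. For a block matrix $M=\begin{bmatrix}A&B\\C&D\end{bmatrix}$ with $A,D$ square, $M/A=D-CA^\dagger B$ and $M/D=A-BD^\dagger C$. The conductance matrix $\mathcal{C}^\sigma(i,j)=\mathcal{L}/\mathcal{L}_{\{i,j\}^c,\{i,j\}^c}$, blocks ordered $i$ then $j$. $(X_t)$: simple random walk with transition probabilities $w_{xy}/\deg(x)$; $T^1_i=\inf\{t\ge1:X_t=i\}$; $\Omega^1_i=\mathbb{E}\big[\prod_{\ell=1}^{T^1_i}\sigma_{X_{\ell-1}X_\ell}\mid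 X_0=i\big]$ (ordered product). *)

theory Defs
  imports "HOL-Analysis.Analysis"
begin

text \<open>Matrices are represented as functions on an index type, restricted to explicit
finite index sets. The nd x nd connection Laplacian is indexed by pairs (vertex, component),
with components in {0..<d}.\<close>

definition comps :: "nat \<Rightarrow> nat set" where
  "comps d = {0..<d}"

definition orth_mat :: "nat \<Rightarrow> (nat \<Rightarrow> nat \<Rightarrow> real) \<Rightarrow> bool" where
  "orth_mat d M \<longleftrightarrow> (\<forall>a<d. \<forall>b<d. (\<Sum>k<d. M k a * M k b) = (if a = b then 1 else 0))"

definition edges_of :: "'v set \<Rightarrow> ('v \<Rightarrow> 'v \<Rightarrow> real) \<Rightarrow> ('v \<times> 'v) set" where
  "edges_of V w = {(x, y). x \<in> V \<and> y \<in> V \<and> w x y > 0}"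

definition connection_graph ::
  "'v set \<Rightarrow> ('v \<Rightarrow> 'v \<Rightarrow> real) \<Rightarrow> nat \<Rightarrow> ('v \<Rightarrow> 'v \<Rightarrow> nat \<Rightarrow> nat \<Rightarrow> real) \<Rightarrow> bool" where
  "connection_graph V w d \<sigma> \<longleftrightarrow>
     finite V \<and> V \<noteq> {} \<and>
     (\<forall>x y. w x y = w y x) \<and> (\<forall>x y. w x y \<ge> 0) \<and> (\<forall>x. w x x = 0) \<and>
     (\<forall>x y. (x \<notin> V \<or> y \<notin> V) \<longrightarrow> w x y = 0) \<and>
     (\<forall>x\<in>V. \<forall>y\<in>V. (x, y) \<in> (edges_of V w)\<^sup>*) \<and>
     (\<forall>x y. (x, y) \<in> edges_of V w \<longrightarrow>
         orth_mat d (\<sigma> x y) \<and> (\<forall>a b. \<sigma> y x a b = \<sigma> x y b a))"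

definition deg :: "'v set \<Rightarrow> ('v \<Rightarrow> 'v \<Rightarrow> real) \<Rightarrow> 'v \<Rightarrow> real" where
  "deg V w x = (\<Sum>y\<in>V. w x y)"

definition conn_laplacian ::
  "'v set \<Rightarrow> ('v \<Rightarrow> 'v \<Rightarrow> real) \<Rightarrow> ('v \<Rightarrow> 'v \<Rightarrow> nat \<Rightarrow> nat \<Rightarrow> real)
    \<Rightarrow> ('v \<times> nat) \<Rightarrow> ('v \<times> nat) \<Rightarrow> real" where
  "conn_laplacian V w \<sigma> p q =
     (if fst p = fst q then (if snd p = snd q then deg V w (fst p) else 0)
      else - w (fst p) (fst q) * \<sigma> (fst p) (fst q) (snd p) (snd q))"

definition mmul_on :: "'a set \<Rightarrow> ('a \<Rightarrow> 'a \<Rightarrow> real) \<Rightarrow> ('a \<Rightarrow> 'a \<Rightarrow> real) \<Rightarrow> 'a \<Rightarrow> 'a \<Rightarrow> real" where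
  "mmul_on T A B = (\<lambda>x y. \<Sum>k\<in>T. A x k * B k y)"

definition is_pinv_on :: "'a set \<Rightarrow> ('a \<Rightarrow> 'a \<Rightarrow> real) \<Rightarrow> ('a \<Rightarrow> 'a \<Rightarrow> real) \<Rightarrow> bool" where
  "is_pinv_on T A P \<longleftrightarrow>
     (\<forall>x y. (x \<notin> T \<or> y \<notin> T) \<longrightarrow> P x y = 0) \<and>
     (\<forall>x\<in>T. \<forall>y\<in>T. mmul_on T (mmul_on T A P) A x y = A x y) \<and>
     (\<forall>x\<in>T. \<forall>y\<in>T. mmul_on T (mmul_on T P A) P x y = P x y) \<and>
     (\<forall>x\<in>T. \<forall>y\<in>T. mmul_on T A P x y = mmul_on T A P y x) \<and>
     (\<forall>x\<in>T. \<forall>y\<in>T. mmul_on T P A x y = mmul_on T P A y x)"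

definition pinv_on :: "'a set \<Rightarrow> ('a \<Rightarrow> 'a \<Rightarrow> real) \<Rightarrow> 'a \<Rightarrow> 'a \<Rightarrow> real" where
  "pinv_on T A = (THE P. is_pinv_on T A P)"

text \<open>Schur complement M / M_{T,T}: for a block matrix with the complementary block indexed
by T, the entries (x,y) outside T give A - B (M_{T,T})^+ C.\<close>

definition schur :: "'a set \<Rightarrow> ('a \<Rightarrow> 'a \<Rightarrow> real) \<Rightarrow> 'a \<Rightarrow> 'a \<Rightarrow> real" where
  "schur T M = (\<lambda>x y. M x y - (\<Sum>k\<in>T. \<Sum>l\<in>T. M x k * pinv_on T M k l * M l y))"

text \<open>Conductance matrix C(i,j) = L / L_{{i,j}^c,{i,j}^c}, read on ({i,j} x [d]) squared.\<close>

definition conductance ::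
  "'v set \<Rightarrow> ('v \<Rightarrow> 'v \<Rightarrow> real) \<Rightarrow> nat \<Rightarrow> ('v \<Rightarrow> 'v \<Rightarrow> nat \<Rightarrow> nat \<Rightarrow> real) \<Rightarrow> 'v \<Rightarrow> 'v
    \<Rightarrow> ('v \<times> nat) \<Rightarrow> ('v \<times> nat) \<Rightarrow> real" where
  "conductance V w d \<sigma> i j = schur ((V - {i, j}) \<times> comps d) (conn_laplacian V w \<sigma>)"

fun path_prob :: "'v set \<Rightarrow> ('v \<Rightarrow> 'v \<Rightarrow> real) \<Rightarrow> 'v \<Rightarrow> 'v list \<Rightarrow> real" where
  "path_prob V w x [] = 1"
| "path_prob V w x (y # ys) = w x y / deg V w x * path_prob V w y ys"

fun path_hol :: "nat \<Rightarrow> ('v \<Rightarrow> 'v \<Rightarrow> nat \<Rightarrow> nat \<Rightarrow> real) \<Rightarrow> 'v \<Rightarrow> 'v list \<Rightarrow> nat \<Rightarrow> nat \<Rightarrow> real" where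
  "path_hol d \<sigma> x [] = (\<lambda>a b. if a = b then 1 else 0)"
| "path_hol d \<sigma> x (y # ys) = (\<lambda>a b. \<Sum>k<d. \<sigma> x y a k * path_hol d \<sigma> y ys k b)"

text \<open>Excursions from i: the sequences X_1..X_T with T = T^1_i the first return time.\<close>

definition excursions :: "'v set \<Rightarrow> 'v \<Rightarrow> 'v list set" where
  "excursions V i = {xs. xs \<noteq> [] \<and> set xs \<subseteq> V \<and> last xs = i \<and> i \<notin> set (butlast xs)}"

text \<open>Omega^1_i = E[ prod_{l=1}^{T^1_i} sigma_{X_{l-1} X_l} | X_0 = i ], entrywise, written as
the sum over all excursions of (probability of the excursion) * (holonomy along it).\<close>

definition Omega1 ::
  "'v set \<Rightarrow> ('v \<Rightarrow> 'v \<Rightarrow> real) \<Rightarrow> nat \<Rightarrow> ('v \<Rightarrow> 'v \<Rightarrow> nat \<Rightarrow> nat \<Rightarrow> real) \<Rightarrow> 'v \<Rightarrow> nat \<Rightarrow> nat \<Rightarrow> real" where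
  "Omega1 V w d \<sigma> i a b =
     infsum (\<lambda>xs. path_prob V w i xs * path_hol d \<sigma> i xs a b) (excursions V i)"

end

theory Submission
  imports Defs "Jordan_Normal_Form.Determinant"
begin

(* Eliminating first the block (V - {i,j}) x [d] and then the block {j} x [d] of the connection
   Laplacian L is the same as eliminating U = (V - {i}) x [d] at once (the quotient formula for
   Schur complements), so both sides reduce to entries of L / L_UU. The grounded block L_UU is
   nonsingular: its quadratic form is the sum over edges of w_xy |f_x - sigma_xy f_y|^2, and a
   vector killed by it is parallel-transported along edges from the vertex i, where it vanishes.
   Hence (L / L_UU)_ii = L_ii + L_iU H for the unique solution H of L_UU H = - L_Ui. By first-step
   analysis of the random walk, the expected holonomies H_x = E_x[prod of sigma up to the first
   visit to i] solve this system, and at x = i the same first-step equation reads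
   deg(i) Omega^1_i = sum_y w_iy sigma_iy H_y = - L_iU H. *)

section \<open>Matrices indexed by finite sets\<close>

definition nonsingular_on :: "'a set \<Rightarrow> ('a \<Rightarrow> 'a \<Rightarrow> real) \<Rightarrow> bool" where
  "nonsingular_on T A \<longleftrightarrow> (\<forall>f. (\<forall>p\<in>T. (\<Sum>q\<in>T. A p q * f q) = 0) \<longrightarrow> (\<forall>q\<in>T. f q = 0))"

definition inverse_on :: "'a set \<Rightarrow> ('a \<Rightarrow> 'a \<Rightarrow> real) \<Rightarrow> ('a \<Rightarrow> 'a \<Rightarrow> real) \<Rightarrow> bool" where
  "inverse_on T A B \<longleftrightarrow>
     (\<forall>x y. (x \<notin> T \<or> y \<notin> T) \<longrightarrow> B x y = 0) \<and>
     (\<forall>x\<in>T. \<forall>y\<in>T. (\<Sum>k\<in>T. A x k * B k y) = (if x = y then 1 else 0)) \<and>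
     (\<forall>x\<in>T. \<forall>y\<in>T. (\<Sum>k\<in>T. B x k * A k y) = (if x = y then 1 else 0))"

lemma sum_delta_mult:
  fixes f :: "'a \<Rightarrow> 'b::semiring_1"
  assumes "finite A"
  shows "(\<Sum>k\<in>A. (if x = k then 1 else 0) * f k) = (if x \<in> A then f x else 0)"
proof -
  have "(\<Sum>k\<in>A. (if x = k then 1 else 0) * f k) = (\<Sum>k\<in>A. if x = k then f k else 0)"
    by (rule sum.cong) auto
  then show ?thesis
    using assms by simp
qed

lemma sum_swap3: "(\<Sum>a\<in>A. \<Sum>b\<in>B. \<Sum>c\<in>C. f a b c) = (\<Sum>b\<in>B. \<Sum>c\<in>C. \<Sum>a\<in>A. f a b c)"
  by (subst sum.swap) (rule sum.cong[OF refl], rule sum.swap)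

lemma nonsingular_onD:
  "nonsingular_on T A \<Longrightarrow> (\<And>p. p \<in> T \<Longrightarrow> (\<Sum>q\<in>T. A p q * f q) = 0) \<Longrightarrow> q \<in> T \<Longrightarrow> f q = 0"
  unfolding nonsingular_on_def by blast

context
  fixes T :: "'a set" and n :: nat and g :: "nat \<Rightarrow> 'a"
  assumes enum: "bij_betw g {..<n} T"
begin

lemma enum_inv_into:
  shows "r < n \<Longrightarrow> inv_into {..<n} g (g r) = r"
    and "x \<in> T \<Longrightarrow> g (inv_into {..<n} g x) = x"
    and "x \<in> T \<Longrightarrow> inv_into {..<n} g x < n"
    and "r < n \<Longrightarrow> g r \<in> T"
  using enum bij_betw_apply[OF bij_betw_inv_into[OF enum]]
  by (auto simp: bij_betw_def bij_betw_inv_into_right inv_into_f_f)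

lemma sum_enum: "(\<Sum>q\<in>T. F q) = (\<Sum>c<n. F (g c))"
  using sum.reindex_bij_betw[OF enum] by metis

lemma det_enum_mat_neq_0:
  assumes A: "nonsingular_on T A"
  shows "det (mat n n (\<lambda>(r, c). A (g r) (g c))) \<noteq> 0"
proof
  let ?h = "inv_into {..<n} g" and ?M = "mat n n (\<lambda>(r, c). A (g r) (g c))"
  assume "det ?M = 0"
  then obtain v where v: "v \<in> carrier_vec n" "v \<noteq> 0\<^sub>v n" "?M *\<^sub>v v = 0\<^sub>v n"
    using det_0_iff_vec_prod_zero[of ?M n] by auto
  have "(\<Sum>q\<in>T. A p q * v $ ?h q) = 0" if "p \<in> T" for p
  proof -
    have "(\<Sum>q\<in>T. A p q * v $ ?h q) = (\<Sum>c<n. A p (g c) * v $ c)"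
      unfolding sum_enum by (simp add: enum_inv_into)
    also have "\<dots> = (?M *\<^sub>v v) $ ?h p"
      using that v(1) enum_inv_into by (simp add: mult_mat_vec_def scalar_prod_def atLeast0LessThan)
    finally show ?thesis
      using v(3) enum_inv_into(3)[OF that] by simp
  qed
  then have "v $ ?h q = 0" if "q \<in> T" for q
    using nonsingular_onD[OF A, where f = "\<lambda>q. v $ ?h q"] that by blast
  then have "v $ r = 0" if "r < n" for r
    using that by (metis enum_inv_into(1,4))
  then have "v = 0\<^sub>v n"
    using v(1) by (intro eq_vecI) auto
  with v(2) show False ..
qed

lemma sum_mult_eq_enum_mat_mult:
  assumes xy: "x \<in> T" "y \<in> T" and "P' \<in> carrier_mat n n" "Q' \<in> carrier_mat n n"
    and P: "\<And>r c. r < n \<Longrightarrow> c < n \<Longrightarrow> P (g r) (g c) = P' $$ (r, c)"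
    and Q: "\<And>r c. r < n \<Longrightarrow> c < n \<Longrightarrow> Q (g r) (g c) = Q' $$ (r, c)"
  shows "(\<Sum>k\<in>T. P x k * Q k y) = (P' * Q') $$ (inv_into {..<n} g x, inv_into {..<n} g y)"
proof -
  let ?h = "inv_into {..<n} g"
  have "(\<Sum>k\<in>T. P x k * Q k y) = (\<Sum>c<n. P' $$ (?h x, c) * Q' $$ (c, ?h y))"
    unfolding sum_enum
    using P[OF enum_inv_into(3)[OF xy(1)]] Q[OF _ enum_inv_into(3)[OF xy(2)]] enum_inv_into(2) xy
    by (intro sum.cong) auto
  also have "\<dots> = (P' * Q') $$ (?h x, ?h y)"
    using assms enum_inv_into(3) by (simp add: index_mult_mat scalar_prod_def atLeast0LessThan)
  finally show ?thesis .
qed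

end

lemma nonsingular_on_imp_inverse_on:
  assumes "finite T" and A: "nonsingular_on T A"
  shows "\<exists>B. inverse_on T A B"
proof -
  obtain n :: nat and g where g: "bij_betw g {..<n} T"
    using ex_bij_betw_nat_finite[OF \<open>finite T\<close>] unfolding atLeast0LessThan by blast
  let ?h = "inv_into {..<n} g"
  define M where "M = mat n n (\<lambda>(r, c). A (g r) (g c))"
  have M: "M \<in> carrier_mat n n"
    unfolding M_def by simp
  have "M \<in> Units (ring_mat TYPE(real) n ())"
    using det_enum_mat_neq_0[OF g A] by (intro det_non_zero_imp_unit[OF M]) (simp add: M_def)
  then obtain N where N: "N \<in> carrier_mat n n" "M * N = 1\<^sub>m n" "N * M = 1\<^sub>m n"
    by (auto simp: Units_def ring_mat_simps)
  define B where "B x y = (if x \<in> T \<and> y \<in> T then N $$ (?h x, ?h y) else 0)" for x y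
  have "inverse_on T A B"
    unfolding inverse_on_def
  proof (intro conjI ballI allI impI)
    fix x y assume xy: "x \<in> T" "y \<in> T"
    have one: "1\<^sub>m n $$ (?h x, ?h y) = (if x = y then 1 else 0)"
      using xy enum_inv_into[OF g] by (metis index_one_mat(1))
    show "(\<Sum>k\<in>T. A x k * B k y) = (if x = y then 1 else 0)"
      using sum_mult_eq_enum_mat_mult[OF g xy M N(1), of A B] N(2) one
      by (simp add: M_def B_def enum_inv_into[OF g])
    show "(\<Sum>k\<in>T. B x k * A k y) = (if x = y then 1 else 0)"
      using sum_mult_eq_enum_mat_mult[OF g xy N(1) M, of B A] N(3) one
      by (simp add: M_def B_def enum_inv_into[OF g])
  qed (auto simp: B_def)
  then show ?thesis
    by blast
qed

lemma mmul_on_assoc: "mmul_on T (mmul_on T A B) C = mmul_on T A (mmul_on T B C)"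
  unfolding mmul_on_def
  by (auto simp: fun_eq_iff sum_distrib_left sum_distrib_right mult.assoc intro: sum.swap)

lemma mmul_on_cong:
  "(\<And>k. k \<in> T \<Longrightarrow> A x k = A' x k) \<Longrightarrow> (\<And>k. k \<in> T \<Longrightarrow> B k y = B' k y)
    \<Longrightarrow> mmul_on T A B x y = mmul_on T A' B' x y"
  unfolding mmul_on_def by (rule sum.cong) auto

lemma mmul_on_left_unit:
  assumes "finite T" "x \<in> T" "\<And>k. k \<in> T \<Longrightarrow> D x k = (if x = k then 1 else 0)"
  shows "mmul_on T D X x y = X x y"
proof -
  have "mmul_on T D X x y = (\<Sum>k\<in>T. if x = k then X k y else 0)"
    unfolding mmul_on_def using assms(3) by (intro sum.cong) auto
  then show ?thesis
    using assms(1,2) by simp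
qed

lemma mmul_on_right_unit:
  assumes "finite T" "y \<in> T" "\<And>k. k \<in> T \<Longrightarrow> D k y = (if k = y then 1 else 0)"
  shows "mmul_on T X D x y = X x y"
proof -
  have "mmul_on T X D x y = (\<Sum>k\<in>T. if k = y then X x k else 0)"
    unfolding mmul_on_def using assms(3) by (intro sum.cong) auto
  then show ?thesis
    using assms(1,2) by simp
qed

lemma pinv_on_eqI:
  assumes fin: "finite T" and B: "inverse_on T A B"
  shows "pinv_on T A = B"
proof -
  have AB: "mmul_on T A B x y = (if x = y then 1 else 0)"
    and BA: "mmul_on T B A x y = (if x = y then 1 else 0)" if "x \<in> T" "y \<in> T" for x y
    using B that unfolding inverse_on_def mmul_on_def by auto
  have "is_pinv_on T A B"
    using B unfolding is_pinv_on_def inverse_on_def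
    by (auto simp: mmul_on_left_unit[OF fin] AB BA)
  moreover have "P = B" if P: "is_pinv_on T A P" for P
  proof -
    have APA: "mmul_on T (mmul_on T A P) A k v = A k v" if "k \<in> T" "v \<in> T" for k v
      using P that unfolding is_pinv_on_def by blast
    have PA: "mmul_on T P A u v = (if u = v then 1 else 0)" if uv: "u \<in> T" "v \<in> T" for u v
    proof -
      have "mmul_on T P A u v = mmul_on T (mmul_on T B A) (mmul_on T P A) u v"
        using uv BA by (simp add: mmul_on_left_unit[OF fin])
      also have "\<dots> = mmul_on T B (mmul_on T (mmul_on T A P) A) u v"
        by (simp add: mmul_on_assoc)
      also have "\<dots> = mmul_on T B A u v"
        using APA uv by (intro mmul_on_cong) auto
      finally show ?thesis
        using BA uv by simp
    qed
    show "P = B"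
    proof (intro ext)
      fix u v
      show "P u v = B u v"
      proof (cases "u \<in> T \<and> v \<in> T")
        case True
        then have "P u v = mmul_on T P (mmul_on T A B) u v"
          using AB by (simp add: mmul_on_right_unit[OF fin])
        also have "\<dots> = B u v"
          using True PA by (simp add: mmul_on_assoc[symmetric] mmul_on_left_unit[OF fin])
        finally show ?thesis .
      qed (use P B in \<open>auto simp: is_pinv_on_def inverse_on_def\<close>)
    qed
  qed
  ultimately show ?thesis
    unfolding pinv_on_def by (rule the_equality)
qed

lemma inverse_on_pinv_on:
  "finite T \<Longrightarrow> nonsingular_on T A \<Longrightarrow> inverse_on T A (pinv_on T A)"
  using nonsingular_on_imp_inverse_on pinv_on_eqI by metis

lemma inverse_on_left:
  "inverse_on T A B \<Longrightarrow> x \<in> T \<Longrightarrow> y \<in> T \<Longrightarrow> (\<Sum>k\<in>T. B x k * A k y) = (if x = y then 1 else 0)"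
  and inverse_on_right:
  "inverse_on T A B \<Longrightarrow> x \<in> T \<Longrightarrow> y \<in> T \<Longrightarrow> (\<Sum>k\<in>T. A x k * B k y) = (if x = y then 1 else 0)"
  unfolding inverse_on_def by blast+

lemma inverse_on_solve:
  assumes "finite T" and B: "inverse_on T A B" and "x \<in> T"
    and f: "\<And>p. p \<in> T \<Longrightarrow> (\<Sum>q\<in>T. A p q * f q) = r p"
  shows "f x = (\<Sum>l\<in>T. B x l * r l)"
proof -
  have "(\<Sum>l\<in>T. B x l * r l) = (\<Sum>l\<in>T. \<Sum>q\<in>T. B x l * A l q * f q)"
    by (intro sum.cong) (simp_all add: f[symmetric] sum_distrib_left mult.assoc)
  also have "\<dots> = (\<Sum>q\<in>T. (\<Sum>l\<in>T. B x l * A l q) * f q)"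
    by (subst sum.swap) (simp add: sum_distrib_right)
  also have "\<dots> = f x"
    using assms by (simp add: inverse_on_left sum_delta_mult)
  finally show ?thesis ..
qed

lemma inverse_on_solution:
  assumes "finite T" and B: "inverse_on T A B" and "p \<in> T"
  shows "(\<Sum>q\<in>T. A p q * (\<Sum>l\<in>T. B q l * r l)) = r p"
proof -
  have "(\<Sum>q\<in>T. A p q * (\<Sum>l\<in>T. B q l * r l)) = (\<Sum>l\<in>T. (\<Sum>q\<in>T. A p q * B q l) * r l)"
    by (simp add: sum_distrib_left sum_distrib_right mult.assoc) (rule sum.swap)
  also have "\<dots> = r p"
    using assms by (simp add: inverse_on_right sum_delta_mult)
  finally show ?thesis .
qed

section \<open>Schur complements\<close>

lemma schur_eq_0_if_mem:
  assumes "finite S" "nonsingular_on S L" "p \<in> S"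
  shows "schur S L p q = 0"
proof -
  have "(\<Sum>k\<in>S. \<Sum>l\<in>S. L p k * pinv_on S L k l * L l q) = (\<Sum>l\<in>S. (\<Sum>k\<in>S. L p k * pinv_on S L k l) * L l q)"
    by (subst sum.swap) (simp add: sum_distrib_right)
  also have "\<dots> = L p q"
    using assms by (simp add: inverse_on_right[OF inverse_on_pinv_on] sum_delta_mult)
  finally show ?thesis
    unfolding schur_def by simp
qed

lemma schur_eq_solution:
  assumes "finite U" "nonsingular_on U L"
    and H: "\<And>p. p \<in> U \<Longrightarrow> (\<Sum>q\<in>U. L p q * H q) = - L p y"
  shows "schur U L x y = L x y + (\<Sum>q\<in>U. L x q * H q)"
proof -
  have "H k = - (\<Sum>l\<in>U. pinv_on U L k l * L l y)" if "k \<in> U" for k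
    using inverse_on_solve[OF \<open>finite U\<close> inverse_on_pinv_on[OF assms(1,2)] that H]
    by (simp add: sum_negf)
  then have "(\<Sum>q\<in>U. L x q * H q) = - (\<Sum>k\<in>U. \<Sum>l\<in>U. L x k * pinv_on U L k l * L l y)"
    by (simp add: sum_distrib_left mult.assoc sum_negf)
  then show ?thesis
    unfolding schur_def by simp
qed

text \<open>Gaussian elimination: once the equations in the rows \<open>S\<close> have expressed \<open>f\<close> on \<open>S\<close>
  through its values on \<open>J\<close>, any row of \<open>L f\<close> is the Schur complement acting on \<open>f\<close> restricted to
  \<open>J\<close>.\<close>

lemma schur_elimination:
  assumes "finite S" "finite J" "S \<inter> J = {}"
    and f: "\<And>k. k \<in> S \<Longrightarrow> f k = - (\<Sum>l\<in>S. pinv_on S L k l * (c l + (\<Sum>q\<in>J. L l q * f q)))"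
  shows "(\<Sum>q\<in>S \<union> J. L x q * f q)
    = (\<Sum>q\<in>J. schur S L x q * f q) - (\<Sum>k\<in>S. \<Sum>l\<in>S. L x k * pinv_on S L k l * c l)"
proof -
  let ?P = "pinv_on S L"
  have "L x k * f k
      = - (\<Sum>l\<in>S. L x k * ?P k l * c l) - (\<Sum>l\<in>S. \<Sum>q\<in>J. L x k * ?P k l * L l q * f q)"
    if "k \<in> S" for k
    by (simp add: f[OF that] sum_distrib_left distrib_left right_diff_distrib sum.distrib sum_negf mult.assoc)
  then have "(\<Sum>k\<in>S. L x k * f k)
      = - (\<Sum>k\<in>S. \<Sum>l\<in>S. L x k * ?P k l * c l) - (\<Sum>k\<in>S. \<Sum>l\<in>S. \<Sum>q\<in>J. L x k * ?P k l * L l q * f q)"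
    by (simp add: sum_subtractf sum_negf)
  also have "(\<Sum>k\<in>S. \<Sum>l\<in>S. \<Sum>q\<in>J. L x k * ?P k l * L l q * f q)
      = (\<Sum>q\<in>J. \<Sum>k\<in>S. \<Sum>l\<in>S. L x k * ?P k l * L l q * f q)"
    by (rule sum_swap3[symmetric])
  also have "\<dots> = (\<Sum>q\<in>J. (\<Sum>k\<in>S. \<Sum>l\<in>S. L x k * ?P k l * L l q) * f q)"
    by (simp add: sum_distrib_right)
  finally show ?thesis
    using assms(1-3)
    by (simp add: sum.union_disjoint schur_def left_diff_distrib sum_subtractf)
qed

lemma nonsingular_on_schur:
  assumes S: "finite S" and J: "finite J" and disj: "S \<inter> J = {}"
    and LS: "nonsingular_on S L" and LU: "nonsingular_on (S \<union> J) L"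
  shows "nonsingular_on J (schur S L)"
  unfolding nonsingular_on_def
proof (intro allI impI ballI)
  fix g r
  assume g: "\<forall>p\<in>J. (\<Sum>q\<in>J. schur S L p q * g q) = 0" and r: "r \<in> J"
  define f where "f k = (if k \<in> S then - (\<Sum>l\<in>S. pinv_on S L k l * (\<Sum>q\<in>J. L l q * g q)) else g k)"
    for k
  have fJ: "f q = g q" if "q \<in> J" for q
    using disj that by (auto simp: f_def)
  have "f k = - (\<Sum>l\<in>S. pinv_on S L k l * (0 + (\<Sum>q\<in>J. L l q * f q)))" if "k \<in> S" for k
    using that fJ by (simp add: f_def)
  from schur_elimination[OF S J disj this]
  have "(\<Sum>q\<in>S \<union> J. L p q * f q) = (\<Sum>q\<in>J. schur S L p q * g q)" for p
    by (simp add: fJ)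
  also have "\<dots> p = 0" if "p \<in> S \<union> J" for p
    using g that by (auto simp: schur_eq_0_if_mem[OF S LS])
  finally have "f r = 0"
    using nonsingular_onD[OF LU] r by blast
  then show "g r = 0"
    using fJ[OF r] by simp
qed

lemma schur_quotient_formula:
  assumes S: "finite S" and J: "finite J" and disj: "S \<inter> J = {}"
    and LS: "nonsingular_on S L" and LU: "nonsingular_on (S \<union> J) L"
  shows "schur J (schur S L) x y = schur (S \<union> J) L x y"
proof -
  let ?U = "S \<union> J"
  have U: "finite ?U"
    using S J by simp
  define H where "H k = (\<Sum>l\<in>?U. pinv_on ?U L k l * - L l y)" for k
  have H: "(\<Sum>q\<in>?U. L p q * H q) = - L p y" if "p \<in> ?U" for p
    unfolding H_def by (rule inverse_on_solution[OF U inverse_on_pinv_on[OF U LU] that])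
  have HS_row: "(\<Sum>q\<in>S. L p q * H q) = - (L p y + (\<Sum>q\<in>J. L p q * H q))" if "p \<in> S" for p
    using H[of p] that S J disj by (simp add: sum.union_disjoint)
  have HS: "H k = - (\<Sum>l\<in>S. pinv_on S L k l * (L l y + (\<Sum>q\<in>J. L l q * H q)))"
    if "k \<in> S" for k
    using inverse_on_solve[OF S inverse_on_pinv_on[OF S LS] that HS_row]
    by (simp only: mult_minus_right sum_negf)
  have elim: "(\<Sum>q\<in>?U. L x q * H q) = (\<Sum>q\<in>J. schur S L x q * H q) - (L x y - schur S L x y)" for x
    using schur_elimination[OF S J disj HS, of x] by (simp add: schur_def)
  have HJ: "(\<Sum>q\<in>J. schur S L p q * H q) = - schur S L p y" if "p \<in> J" for p
    using elim[of p] H[of p] that by simp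
  have "schur J (schur S L) x y = schur S L x y + (\<Sum>q\<in>J. schur S L x q * H q)"
    by (rule schur_eq_solution[OF J nonsingular_on_schur[OF assms] HJ])
  also have "\<dots> = L x y + (\<Sum>q\<in>?U. L x q * H q)"
    using elim[of x] by simp
  also have "\<dots> = schur ?U L x y"
    by (rule schur_eq_solution[OF U LU H, symmetric])
  finally show ?thesis .
qed

section \<open>Orthogonal matrices\<close>

lemma orth_mat_id: "orth_mat d (\<lambda>a b. if a = b then 1 else 0)"
  unfolding orth_mat_def by (simp add: if_distrib[of "\<lambda>z. z * _"] cong: if_cong)

lemma orth_mat_mult:
  assumes M: "orth_mat d M" and N: "orth_mat d N"
  shows "orth_mat d (\<lambda>a b. \<Sum>k<d. M a k * N k b)"
  unfolding orth_mat_def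
proof (intro allI impI)
  fix a b assume "a < d" "b < d"
  have "(\<Sum>c<d. (\<Sum>k<d. M c k * N k a) * (\<Sum>l<d. M c l * N l b))
      = (\<Sum>c<d. \<Sum>k<d. \<Sum>l<d. (M c k * M c l) * (N k a * N l b))"
    by (simp add: sum_product mult_ac)
  also have "\<dots> = (\<Sum>k<d. \<Sum>l<d. (\<Sum>c<d. M c k * M c l) * (N k a * N l b))"
    unfolding sum_distrib_right by (rule sum_swap3)
  also have "\<dots> = (\<Sum>k<d. N k a * N k b)"
    using M unfolding orth_mat_def by (simp add: sum_delta_mult)
  also have "\<dots> = (if a = b then 1 else 0)"
    using N \<open>a < d\<close> \<open>b < d\<close> unfolding orth_mat_def by simp
  finally show "(\<Sum>c<d. (\<Sum>k<d. M c k * N k a) * (\<Sum>l<d. M c l * N l b)) = (if a = b then 1 else 0)" .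
qed

lemma orth_mat_norm:
  assumes "orth_mat d M"
  shows "(\<Sum>a<d. (\<Sum>b<d. M a b * v b)\<^sup>2) = (\<Sum>b<d. (v b)\<^sup>2)"
proof -
  have "(\<Sum>a<d. (\<Sum>b<d. M a b * v b)\<^sup>2) = (\<Sum>a<d. \<Sum>b<d. \<Sum>c<d. (M a b * M a c) * (v b * v c))"
    by (simp add: power2_eq_square sum_product mult_ac)
  also have "\<dots> = (\<Sum>b<d. \<Sum>c<d. (\<Sum>a<d. M a b * M a c) * (v b * v c))"
    unfolding sum_distrib_right by (rule sum_swap3)
  also have "\<dots> = (\<Sum>b<d. (v b)\<^sup>2)"
    using assms unfolding orth_mat_def by (simp add: sum_delta_mult power2_eq_square)
  finally show ?thesis .
qed

lemma orth_mat_entry_bound: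
  assumes "orth_mat d M" "a < d" "b < d"
  shows "\<bar>M a b\<bar> \<le> 1"
proof -
  have "(M a b)\<^sup>2 \<le> (\<Sum>k<d. (M k b)\<^sup>2)"
    using assms(2) by (intro member_le_sum) auto
  also have "\<dots> = 1"
    using assms(1,3) unfolding orth_mat_def by (simp add: power2_eq_square)
  finally show ?thesis
    by (simp add: abs_square_le_1)
qed

section \<open>Excursions\<close>

lemma has_sum_sum:
  fixes g :: "'k \<Rightarrow> 'a \<Rightarrow> 'b::topological_comm_monoid_add"
  assumes "finite K" "\<And>k. k \<in> K \<Longrightarrow> (g k has_sum s k) A"
  shows "((\<lambda>x. \<Sum>k\<in>K. g k x) has_sum (\<Sum>k\<in>K. s k)) A"
  using assms by (induction K rule: finite_induct) (simp_all add: has_sum_add)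

lemma has_sum_UN_disjoint:
  fixes f :: "'a \<Rightarrow> 'b::topological_comm_monoid_add"
  assumes "finite Y" "\<And>y. y \<in> Y \<Longrightarrow> (f has_sum s y) (B y)"
    and "\<And>y z. y \<in> Y \<Longrightarrow> z \<in> Y \<Longrightarrow> y \<noteq> z \<Longrightarrow> B y \<inter> B z = {}"
  shows "(f has_sum (\<Sum>y\<in>Y. s y)) (\<Union>y\<in>Y. B y)"
  using assms
proof (induction Y rule: finite_induct)
  case (insert y Y)
  then have "(f has_sum (s y + (\<Sum>y\<in>Y. s y))) (B y \<union> (\<Union>y\<in>Y. B y))"
    by (intro has_sum_Un_disjoint) auto
  with insert show ?case
    by simp
qed simp

lemma excursions_unfold:
  assumes "i \<in> V"
  shows "excursions V i = insert [i] (\<Union>y\<in>V - {i}. Cons y ` excursions V i)"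
proof (intro equalityI subsetI)
  fix xs assume xs: "xs \<in> excursions V i"
  then obtain y ys where xy: "xs = y # ys"
    unfolding excursions_def by (cases xs) auto
  show "xs \<in> insert [i] (\<Union>y\<in>V - {i}. Cons y ` excursions V i)"
  proof (cases "ys = []")
    case False
    then have "ys \<in> excursions V i" "y \<in> V - {i}"
      using xs xy by (auto simp: excursions_def)
    then show ?thesis
      using xy by blast
  qed (use xs xy in \<open>simp add: excursions_def\<close>)
qed (use assms in \<open>auto simp: excursions_def\<close>)

lemma excursions_length_le_Suc:
  assumes "i \<in> V"
  shows "{xs \<in> excursions V i. length xs \<le> Suc n}
    = insert [i] (\<Union>y\<in>V - {i}. Cons y ` {xs \<in> excursions V i. length xs \<le> n})"
  by (subst excursions_unfold[OF assms]) auto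

lemma finite_excursions_length_le:
  "finite V \<Longrightarrow> finite {xs \<in> excursions V i. length xs \<le> n}"
  by (rule finite_subset[OF _ finite_lists_length_le[of V n]]) (auto simp: excursions_def)

text \<open>The expected holonomy of the walk started at \<open>x\<close> up to its first visit to \<open>i\<close> at a
  positive time; \<open>Omega1\<close> is the case \<open>x = i\<close>.\<close>

definition hitting_holonomy ::
  "'v set \<Rightarrow> ('v \<Rightarrow> 'v \<Rightarrow> real) \<Rightarrow> nat \<Rightarrow> ('v \<Rightarrow> 'v \<Rightarrow> nat \<Rightarrow> nat \<Rightarrow> real) \<Rightarrow> 'v \<Rightarrow> 'v
    \<Rightarrow> nat \<Rightarrow> nat \<Rightarrow> real" where
  "hitting_holonomy V w d \<sigma> i x a b =
     infsum (\<lambda>xs. path_prob V w x xs * path_hol d \<sigma> x xs a b) (excursions V i)"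

lemma Omega1_eq_hitting_holonomy: "Omega1 V w d \<sigma> i = hitting_holonomy V w d \<sigma> i i"
  by (simp add: fun_eq_iff Omega1_def hitting_holonomy_def)

section \<open>Connection graphs\<close>

lemma comps_eq_lessThan: "comps d = {..<d}"
  by (simp add: comps_def atLeast0LessThan)

lemma sum_times_comps: "(\<Sum>p\<in>A \<times> comps d. g p) = (\<Sum>x\<in>A. \<Sum>a<d. g (x, a))"
  by (simp add: sum.cartesian_product' comps_eq_lessThan)

lemma conn_laplacian_row_sum:
  assumes "finite W" "w x x = 0" "a < d"
  shows "(\<Sum>q\<in>W \<times> comps d. conn_laplacian V w \<sigma> (x, a) q * F q)
    = (if x \<in> W then deg V w x * F (x, a) else 0) - (\<Sum>y\<in>W. \<Sum>b<d. w x y * \<sigma> x y a b * F (y, b))"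
proof -
  have entry: "conn_laplacian V w \<sigma> (x, a) q * F q
      = (if x = fst q then 1 else 0) * ((if a = snd q then 1 else 0) * (deg V w x * F q))
        - w x (fst q) * \<sigma> x (fst q) a (snd q) * F q" for q
    using assms(2) unfolding conn_laplacian_def by auto
  have "(\<Sum>q\<in>W \<times> comps d. conn_laplacian V w \<sigma> (x, a) q * F q)
      = (\<Sum>y\<in>W. \<Sum>b<d. (if x = y then 1 else 0) * ((if a = b then 1 else 0) * (deg V w x * F (y, b))))
        - (\<Sum>y\<in>W. \<Sum>b<d. w x y * \<sigma> x y a b * F (y, b))"
    by (simp only: entry sum_subtractf sum_times_comps) simp
  also have "(\<Sum>y\<in>W. \<Sum>b<d. (if x = y then 1 else 0) * ((if a = b then 1 else 0) * (deg V w x * F (y, b))))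
      = (if x \<in> W then deg V w x * F (x, a) else 0)"
    using assms(1,3) by (simp add: sum_distrib_left[symmetric] sum_delta_mult)
  finally show ?thesis .
qed

context
  fixes V :: "'v set" and w :: "'v \<Rightarrow> 'v \<Rightarrow> real" and d :: nat
    and \<sigma> :: "'v \<Rightarrow> 'v \<Rightarrow> nat \<Rightarrow> nat \<Rightarrow> real"
  assumes cg: "connection_graph V w d \<sigma>"
begin

lemma finite_vertices: "finite V"
  and weight_sym: "w x y = w y x"
  and weight_nonneg: "0 \<le> w x y"
  and weight_self: "w x x = 0"
  and weight_outside: "x \<notin> V \<or> y \<notin> V \<Longrightarrow> w x y = 0"
  and vertices_connected: "x \<in> V \<Longrightarrow> y \<in> V \<Longrightarrow> (x, y) \<in> (edges_of V w)\<^sup>*"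
  using cg unfolding connection_graph_def by blast+

lemma orth_mat_connection:
  assumes "0 < w x y"
  shows "orth_mat d (\<sigma> x y)"
proof -
  have "x \<in> V" "y \<in> V"
    using assms weight_outside[of x y] by auto
  with assms show ?thesis
    using cg unfolding connection_graph_def edges_of_def by blast
qed

lemma deg_nonneg: "0 \<le> deg V w x"
  unfolding deg_def by (simp add: sum_nonneg weight_nonneg)

lemma conn_laplacian_form_expand:
  "(\<Sum>p\<in>V \<times> comps d. F p * (\<Sum>q\<in>V \<times> comps d. conn_laplacian V w \<sigma> p q * F q))
    = (\<Sum>x\<in>V. deg V w x * (\<Sum>a<d. (F (x, a))\<^sup>2))
      - (\<Sum>x\<in>V. \<Sum>y\<in>V. w x y * (\<Sum>a<d. F (x, a) * (\<Sum>b<d. \<sigma> x y a b * F (y, b))))"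
proof -
  have row: "F (x, a) * (\<Sum>q\<in>V \<times> comps d. conn_laplacian V w \<sigma> (x, a) q * F q)
      = deg V w x * (F (x, a))\<^sup>2 - (\<Sum>y\<in>V. w x y * (F (x, a) * (\<Sum>b<d. \<sigma> x y a b * F (y, b))))"
    if "x \<in> V" "a < d" for x a
  proof -
    have "(\<Sum>q\<in>V \<times> comps d. conn_laplacian V w \<sigma> (x, a) q * F q)
        = deg V w x * F (x, a) - (\<Sum>y\<in>V. w x y * (\<Sum>b<d. \<sigma> x y a b * F (y, b)))"
      using conn_laplacian_row_sum[where w = w and x = x, OF finite_vertices weight_self that(2)] that(1)
      by (simp add: sum_distrib_left mult.assoc)
    then show ?thesis
      by (simp add: power2_eq_square right_diff_distrib sum_distrib_left mult_ac)
  qed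
  have "(\<Sum>p\<in>V \<times> comps d. F p * (\<Sum>q\<in>V \<times> comps d. conn_laplacian V w \<sigma> p q * F q))
      = (\<Sum>x\<in>V. \<Sum>a<d. deg V w x * (F (x, a))\<^sup>2
          - (\<Sum>y\<in>V. w x y * (F (x, a) * (\<Sum>b<d. \<sigma> x y a b * F (y, b)))))"
    using sum_times_comps[of "\<lambda>p. F p * (\<Sum>q\<in>V \<times> comps d. conn_laplacian V w \<sigma> p q * F q)" V d]
    by (simp add: row)
  then show ?thesis
    by (simp add: sum_subtractf sum_distrib_left sum.swap[of _ V "{..<d}"])
qed

lemma conn_laplacian_quadratic_form:
  "2 * (\<Sum>p\<in>V \<times> comps d. F p * (\<Sum>q\<in>V \<times> comps d. conn_laplacian V w \<sigma> p q * F q))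
    = (\<Sum>x\<in>V. \<Sum>y\<in>V. w x y * (\<Sum>a<d. (F (x, a) - (\<Sum>b<d. \<sigma> x y a b * F (y, b)))\<^sup>2))"
proof -
  define N where "N x = (\<Sum>a<d. (F (x, a))\<^sup>2)" for x
  define P where "P x y = (\<Sum>a<d. F (x, a) * (\<Sum>b<d. \<sigma> x y a b * F (y, b)))" for x y
  have "w x y * (\<Sum>a<d. (\<Sum>b<d. \<sigma> x y a b * F (y, b))\<^sup>2) = w x y * N y" for x y
    using orth_mat_norm[OF orth_mat_connection] weight_nonneg[of x y]
    by (cases "w x y = 0") (auto simp: N_def)
  then have edge_term: "w x y * (\<Sum>a<d. (F (x, a) - (\<Sum>b<d. \<sigma> x y a b * F (y, b)))\<^sup>2)
      = w x y * N x - 2 * (w x y * P x y) + w x y * N y" for x y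
    by (simp add: power2_diff sum.distrib sum_subtractf sum_distrib_left N_def P_def algebra_simps)
  have "(\<Sum>x\<in>V. \<Sum>y\<in>V. w x y * N x) = (\<Sum>x\<in>V. deg V w x * N x)"
    by (simp add: deg_def sum_distrib_right)
  moreover have "(\<Sum>x\<in>V. \<Sum>y\<in>V. w x y * N y) = (\<Sum>x\<in>V. deg V w x * N x)"
    by (subst sum.swap) (simp add: deg_def sum_distrib_right weight_sym)
  ultimately show ?thesis
    unfolding conn_laplacian_form_expand edge_term N_def[symmetric] P_def[symmetric]
    by (simp add: sum.distrib sum_subtractf sum_distrib_left)
qed

lemma conn_laplacian_form_eq_0_imp_vanish:
  assumes Q: "(\<Sum>p\<in>V \<times> comps d. F p * (\<Sum>q\<in>V \<times> comps d. conn_laplacian V w \<sigma> p q * F q)) = 0"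
    and i: "i \<in> V" "\<And>a. a < d \<Longrightarrow> F (i, a) = 0"
    and x: "x \<in> V"
  shows "\<forall>a<d. F (x, a) = 0"
proof -
  let ?E = "\<lambda>x y. w x y * (\<Sum>a<d. (F (x, a) - (\<Sum>b<d. \<sigma> x y a b * F (y, b)))\<^sup>2)"
  have nonneg: "0 \<le> ?E x y" for x y
    by (simp add: weight_nonneg sum_nonneg)
  have "(\<Sum>x\<in>V. \<Sum>y\<in>V. ?E x y) = 0"
    using conn_laplacian_quadratic_form[of F] Q by simp
  then have E0: "?E x y = 0" if "x \<in> V" "y \<in> V" for x y
    using that finite_vertices nonneg by (simp add: sum_nonneg sum_nonneg_eq_0_iff)
  have edge: "F (x, a) = (\<Sum>b<d. \<sigma> x y a b * F (y, b))"
    if "(x, y) \<in> edges_of V w" "a < d" for x y a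
  proof -
    from that(1) have "x \<in> V" "y \<in> V" "w x y \<noteq> 0"
      by (auto simp: edges_of_def)
    with E0[of x y] have "(\<Sum>a<d. (F (x, a) - (\<Sum>b<d. \<sigma> x y a b * F (y, b)))\<^sup>2) = 0"
      by simp
    then show ?thesis
      using that(2) by (simp add: sum_nonneg_eq_0_iff)
  qed
  show ?thesis
    using vertices_connected[OF x i(1)]
  proof (induction rule: converse_rtrancl_induct)
    case base
    then show ?case
      using i(2) by blast
  next
    case (step x y)
    then show ?case
      using edge[OF step(1)] by simp
  qed
qed

lemma nonsingular_on_grounded_laplacian:
  assumes T: "T \<subseteq> V" and i: "i \<in> V" "i \<notin> T"
  shows "nonsingular_on (T \<times> comps d) (conn_laplacian V w \<sigma>)"
  unfolding nonsingular_on_def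
proof (intro allI impI ballI)
  fix f q
  assume f: "\<forall>p\<in>T \<times> comps d. (\<Sum>q\<in>T \<times> comps d. conn_laplacian V w \<sigma> p q * f q) = 0"
    and q: "q \<in> T \<times> comps d"
  define F where "F p = (if p \<in> T \<times> comps d then f p else 0)" for p
  have "(\<Sum>q\<in>V \<times> comps d. conn_laplacian V w \<sigma> p q * F q)
      = (\<Sum>q\<in>T \<times> comps d. conn_laplacian V w \<sigma> p q * f q)" for p
    using T finite_vertices
    by (intro sum.mono_neutral_cong_right) (auto simp: F_def comps_def)
  then have "(\<Sum>p\<in>V \<times> comps d. F p * (\<Sum>q\<in>V \<times> comps d. conn_laplacian V w \<sigma> p q * F q)) = 0"
    using f by (auto simp: F_def intro!: sum.neutral)
  moreover obtain x a where "q = (x, a)" "x \<in> T" "a < d"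
    using q by (auto simp: comps_def)
  moreover have "F (i, b) = 0" for b
    using i(2) by (simp add: F_def)
  ultimately show "f q = 0"
    using conn_laplacian_form_eq_0_imp_vanish[OF _ i(1)] T q by (fastforce simp: F_def)
qed

section \<open>Hitting holonomies\<close>

lemma path_prob_nonneg: "0 \<le> path_prob V w x xs"
  by (induction xs arbitrary: x) (simp_all add: weight_nonneg deg_nonneg)

lemma orth_mat_path_hol: "path_prob V w x xs \<noteq> 0 \<Longrightarrow> orth_mat d (path_hol d \<sigma> x xs)"
proof (induction xs arbitrary: x)
  case Nil
  then show ?case
    using orth_mat_id by simp
next
  case (Cons y ys)
  then have "0 < w x y" "path_prob V w y ys \<noteq> 0"
    using weight_nonneg[of x y] by (auto simp: less_le)
  then show ?case
    using orth_mat_mult[OF orth_mat_connection Cons.IH] by simp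
qed

lemma abs_path_weight_le:
  assumes "a < d" "b < d"
  shows "\<bar>path_prob V w x xs * path_hol d \<sigma> x xs a b\<bar> \<le> path_prob V w x xs"
proof (cases "path_prob V w x xs = 0")
  case False
  then have "\<bar>path_hol d \<sigma> x xs a b\<bar> \<le> 1"
    using orth_mat_entry_bound[OF orth_mat_path_hol assms] by blast
  then show ?thesis
    using path_prob_nonneg[of x xs] by (simp add: abs_mult mult_left_le)
qed simp

lemma sum_path_prob_excursions_le:
  assumes "i \<in> V"
  shows "(\<Sum>xs\<in>{xs \<in> excursions V i. length xs \<le> n}. path_prob V w x xs) \<le> 1"
proof (induction n arbitrary: x)
  case 0
  have "{xs \<in> excursions V i. length xs \<le> 0} = {}"
    by (simp add: excursions_def)
  then show ?case
    by (simp only: sum.empty zero_le_one)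
next
  case (Suc n)
  let ?E = "{xs \<in> excursions V i. length xs \<le> n}"
  have fin: "finite ?E"
    by (rule finite_excursions_length_le[OF finite_vertices])
  have "(\<Sum>xs\<in>(\<Union>y\<in>V - {i}. Cons y ` ?E). path_prob V w x xs)
      = (\<Sum>y\<in>V - {i}. \<Sum>xs\<in>Cons y ` ?E. path_prob V w x xs)"
    using fin finite_vertices by (intro sum.UNION_disjoint) auto
  then have "(\<Sum>xs\<in>{xs \<in> excursions V i. length xs \<le> Suc n}. path_prob V w x xs)
      = w x i / deg V w x + (\<Sum>y\<in>V - {i}. w x y / deg V w x * (\<Sum>ys\<in>?E. path_prob V w y ys))"
    unfolding excursions_length_le_Suc[OF assms] using fin finite_vertices
    by (subst sum.insert) (auto simp: sum.reindex sum_distrib_left)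
  also have "\<dots> \<le> w x i / deg V w x + (\<Sum>y\<in>V - {i}. w x y / deg V w x)"
    using Suc.IH weight_nonneg deg_nonneg
    by (intro add_left_mono sum_mono mult_left_le) auto
  also have "\<dots> = (\<Sum>y\<in>V. w x y / deg V w x)"
    using finite_vertices assms by (simp add: sum.remove)
  also have "\<dots> = deg V w x / deg V w x"
    by (simp only: deg_def sum_divide_distrib)
  also have "\<dots> \<le> 1"
    by simp
  finally show ?case .
qed

lemma summable_on_path_prob:
  assumes "i \<in> V"
  shows "path_prob V w x summable_on excursions V i"
proof (rule nonneg_bdd_above_summable_on)
  show "bdd_above (sum (path_prob V w x) ` {F. F \<subseteq> excursions V i \<and> finite F})"
  proof (rule bdd_aboveI2)
    fix F assume F: "F \<in> {F. F \<subseteq> excursions V i \<and> finite F}"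
    then have "F \<subseteq> {xs \<in> excursions V i. length xs \<le> (\<Sum>xs\<in>F. length xs)}"
      by (auto intro: member_le_sum)
    then have "sum (path_prob V w x) F
        \<le> (\<Sum>xs\<in>{xs \<in> excursions V i. length xs \<le> (\<Sum>xs\<in>F. length xs)}. path_prob V w x xs)"
      by (intro sum_mono2 finite_excursions_length_le finite_vertices path_prob_nonneg)
    also have "\<dots> \<le> 1"
      by (rule sum_path_prob_excursions_le[OF assms])
    finally show "sum (path_prob V w x) F \<le> 1" .
  qed
qed (rule path_prob_nonneg)

lemma summable_on_path_weight:
  assumes "i \<in> V" "a < d" "b < d"
  shows "(\<lambda>xs. path_prob V w x xs * path_hol d \<sigma> x xs a b) summable_on excursions V i"
proof -
  have "(\<lambda>xs. norm (path_prob V w x xs * path_hol d \<sigma> x xs a b)) summable_on excursions V i"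
    by (rule Infinite_Sum.abs_summable_on_comparison_test'[OF summable_on_path_prob[OF assms(1)]])
      (use abs_path_weight_le[OF assms(2,3)] in auto)
  then show ?thesis
    using summable_on_iff_abs_summable_on_real by blast
qed

lemma deg_mult_transition: "deg V w x * (w x y / deg V w x) = w x y"
proof (cases "deg V w x = 0")
  case True
  have "w x y = 0"
  proof (cases "x \<in> V \<and> y \<in> V")
    case True
    then have "w x y \<le> deg V w x"
      unfolding deg_def using finite_vertices weight_nonneg by (intro member_le_sum) auto
    then show ?thesis
      using \<open>deg V w x = 0\<close> weight_nonneg[of x y] by simp
  qed (use weight_outside in blast)
  then show ?thesis
    by simp
qed simp

lemma hitting_holonomy_first_step:
  assumes i: "i \<in> V" and ab: "a < d" "b < d"
  shows "deg V w x * hitting_holonomy V w d \<sigma> i x a b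
    = w x i * \<sigma> x i a b + (\<Sum>y\<in>V - {i}. \<Sum>k<d. w x y * \<sigma> x y a k * hitting_holonomy V w d \<sigma> i y k b)"
proof -
  let ?H = "hitting_holonomy V w d \<sigma> i"
  let ?p = "\<lambda>y. w x y / deg V w x"
  define f where "f xs = path_prob V w x xs * path_hol d \<sigma> x xs a b" for xs
  have "path_hol d \<sigma> x [i] a b = (\<Sum>k<d. if k = b then \<sigma> x i a k else 0)"
    by (simp add: if_distrib[of "\<lambda>z. _ * z"] cong: if_cong)
  then have f_i: "f [i] = ?p i * \<sigma> x i a b"
    using ab by (simp add: f_def)
  have "((\<lambda>ys. \<Sum>k<d. ?p y * \<sigma> x y a k * (path_prob V w y ys * path_hol d \<sigma> y ys k b))
      has_sum (\<Sum>k<d. ?p y * \<sigma> x y a k * ?H y k b)) (excursions V i)" for y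
    unfolding hitting_holonomy_def
    by (intro has_sum_sum has_sum_cmult_right has_sum_infsum summable_on_path_weight i ab) auto
  then have "((f \<circ> Cons y) has_sum (\<Sum>k<d. ?p y * \<sigma> x y a k * ?H y k b)) (excursions V i)" for y
    by (rule has_sum_cong[THEN iffD1, rotated]) (simp add: f_def sum_distrib_left mult_ac)
  then have "(f has_sum (\<Sum>y\<in>V - {i}. \<Sum>k<d. ?p y * \<sigma> x y a k * ?H y k b))
      (\<Union>y\<in>V - {i}. Cons y ` excursions V i)"
    using finite_vertices by (intro has_sum_UN_disjoint) (auto simp: has_sum_reindex)
  then have "(f has_sum (f [i] + (\<Sum>y\<in>V - {i}. \<Sum>k<d. ?p y * \<sigma> x y a k * ?H y k b))) (excursions V i)"
    by (subst excursions_unfold[OF i], intro has_sum_insert) auto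
  then have "?H x a b = ?p i * \<sigma> x i a b + (\<Sum>y\<in>V - {i}. \<Sum>k<d. ?p y * \<sigma> x y a k * ?H y k b)"
    unfolding hitting_holonomy_def f_def[symmetric] f_i by (rule infsumI)
  then have "deg V w x * ?H x a b = deg V w x * ?p i * \<sigma> x i a b
      + (\<Sum>y\<in>V - {i}. \<Sum>k<d. deg V w x * ?p y * \<sigma> x y a k * ?H y k b)"
    by (simp only: distrib_left sum_distrib_left mult.assoc)
  then show ?thesis
    by (simp only: deg_mult_transition)
qed

lemma grounded_system_hitting_holonomy:
  assumes i: "i \<in> V" and p: "p \<in> (V - {i}) \<times> comps d" and b: "b < d"
  shows "(\<Sum>q\<in>(V - {i}) \<times> comps d.
            conn_laplacian V w \<sigma> p q * hitting_holonomy V w d \<sigma> i (fst q) (snd q) b)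
    = - conn_laplacian V w \<sigma> p (i, b)"
proof -
  obtain x a where xa: "p = (x, a)"
    by (cases p)
  with p have "x \<in> V" "x \<noteq> i" "a < d"
    by (auto simp: comps_def)
  note xa = xa this
  have "(\<Sum>q\<in>(V - {i}) \<times> comps d.
            conn_laplacian V w \<sigma> p q * hitting_holonomy V w d \<sigma> i (fst q) (snd q) b)
      = deg V w x * hitting_holonomy V w d \<sigma> i x a b
        - (\<Sum>y\<in>V - {i}. \<Sum>k<d. w x y * \<sigma> x y a k * hitting_holonomy V w d \<sigma> i y k b)"
    using conn_laplacian_row_sum[where w = w and x = x, OF _ weight_self xa(4)] finite_vertices xa
    by simp
  also have "\<dots> = w x i * \<sigma> x i a b"
    using hitting_holonomy_first_step[OF i xa(4) b] by simp
  finally show ?thesis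
    using xa by (simp add: conn_laplacian_def)
qed

lemma schur_conductance_eq:
  assumes i: "i \<in> V" and j: "j \<in> V" "i \<noteq> j" and ab: "a < d" "b < d"
  shows "schur ({j} \<times> comps d) (conductance V w d \<sigma> i j) (i, a) (i, b)
    = deg V w i * ((if a = b then 1 else 0) - Omega1 V w d \<sigma> i a b)"
proof -
  let ?L = "conn_laplacian V w \<sigma>"
  let ?H = "hitting_holonomy V w d \<sigma> i"
  let ?S = "(V - {i, j}) \<times> comps d" and ?J = "{j} \<times> comps d" and ?U = "(V - {i}) \<times> comps d"
  have U: "?S \<union> ?J = ?U"
    using j by auto
  have fin: "finite ?S" "finite ?J" "finite ?U"
    using finite_vertices by (simp_all add: comps_def)
  have LS: "nonsingular_on ?S ?L" and LU: "nonsingular_on ?U ?L"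
    using i by (auto intro: nonsingular_on_grounded_laplacian)
  have "schur ?J (conductance V w d \<sigma> i j) (i, a) (i, b) = schur ?U ?L (i, a) (i, b)"
    unfolding conductance_def U[symmetric]
    by (rule schur_quotient_formula[OF fin(1,2) _ LS LU[folded U]]) auto
  also have "\<dots> = ?L (i, a) (i, b) + (\<Sum>q\<in>?U. ?L (i, a) q * ?H (fst q) (snd q) b)"
    by (rule schur_eq_solution[OF fin(3) LU grounded_system_hitting_holonomy[OF i _ ab(2)]])
  also have "\<dots> = deg V w i * (if a = b then 1 else 0)
      - (\<Sum>y\<in>V - {i}. \<Sum>k<d. w i y * \<sigma> i y a k * ?H y k b)"
  proof -
    have "(\<Sum>q\<in>?U. ?L (i, a) q * ?H (fst q) (snd q) b)
        = - (\<Sum>y\<in>V - {i}. \<Sum>k<d. w i y * \<sigma> i y a k * ?H y k b)"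
      using conn_laplacian_row_sum[where w = w and x = i, OF _ weight_self ab(1)] finite_vertices
      by simp
    moreover have "?L (i, a) (i, b) = deg V w i * (if a = b then 1 else 0)"
      by (simp add: conn_laplacian_def)
    ultimately show ?thesis
      by simp
  qed
  also have "\<dots> = deg V w i * ((if a = b then 1 else 0) - Omega1 V w d \<sigma> i a b)"
    using hitting_holonomy_first_step[OF i ab, of i]
    by (simp add: weight_self Omega1_eq_hitting_holonomy right_diff_distrib)
  finally show ?thesis .
qed

end

theorem lemma5p5:
  fixes V :: "'v set" and w :: "'v \<Rightarrow> 'v \<Rightarrow> real" and d :: nat
    and \<sigma> :: "'v \<Rightarrow> 'v \<Rightarrow> nat \<Rightarrow> nat \<Rightarrow> real" and i j :: 'v
  assumes "connection_graph V w d \<sigma>"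
    and "i \<in> V" and "j \<in> V" and "i \<noteq> j"
  shows "(\<forall>a<d. \<forall>b<d.
           schur ({j} \<times> comps d) (conductance V w d \<sigma> i j) (i, a) (i, b)
             = deg V w i * ((if a = b then 1 else 0) - Omega1 V w d \<sigma> i a b))
         \<and> (\<forall>a<d. \<forall>b<d.
           schur ({i} \<times> comps d) (conductance V w d \<sigma> i j) (j, a) (j, b)
             = deg V w j * ((if a = b then 1 else 0) - Omega1 V w d \<sigma> j a b))"
proof -
  have "conductance V w d \<sigma> j i = conductance V w d \<sigma> i j"
    by (simp add: conductance_def insert_commute)
  then show ?thesis
    using schur_conductance_eq[OF assms] schur_conductance_eq[OF assms(1,3,2) assms(4)[symmetric]]
    by simp
qed

end
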